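(* Let $X,Y\in M_2(\mathbb C)$ be traceless, and put $D_X=\det X$, $D_Y=\det Y$, $T=\frac12\operatorname{tr}(XY)$. (a) For every $t\in\mathbb R$, \[\det\big((1-t)\mathrm{Id}_2+t\exp(X)\exp(Y)\big)=1+2t(1-t)\big(\operatorname{Sin}(D_X)\operatorname{Sin}(D_Y)T+\operatorname{Cos}(D_X)\operatorname{Cos}(D_Y)-1\big)=:\delta(t).\] (b) If $\exp(X)\exp(Y)$ has no eigenvalue in $(-\infty,0]$, then, with $\log$ the principal logarithm, \[\log(\exp X\exp Y)=\operatorname{AC}\big(\operatorname{Cos}(D_X)\operatorname{Cos}(D_Y)+\operatorname{Sin}(D_X)\operatorname{Sin}(D_Y)T\big)\cdot C=\Big(\int_0^1\frac{\mathrm dt}{\delta(t)}\Big)\cdot C,\] where $C=\operatorname{Cos}(D_Y)\operatorname{Sin}(D_X)X+\operatorname{Cos}(D_X)\operatorname{Sin}(D_Y)Y+\frac12\operatorname{Sin}(D_X)\operatorname{Sin}(D_Y)[X,Y]$.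
   Context: $\operatorname{Cos}(z)=\sum_{n\ge0}(-1)^n\frac{z^n}{(2n)!}$, $\operatorname{Sin}(z)=\sum_{n\ge0}(-1)^n\frac{z^n}{(2n+1)!}$ (entire functions). $\operatorname{AC}$ is the analytic function on $\mathbb C\setminus(-\infty,-1]$ defined by $\operatorname{AC}(z)=\int_0^1\frac{\mathrm dt}{1+2t(1-t)(z-1)}$; on the reals $\operatorname{AC}(x)=\frac{\arccos x}{\sqrt{1-x^2}}$ for $-1<x<1$, $\operatorname{AC}(1)=1$, $\operatorname{AC}(x)=\frac{\operatorname{arcosh}x}{\sqrt{x^2-1}}$ for $x>1$. *)

theory Defs
  imports "HOL-Analysis.Analysis"
begin

type_synonym cmat2 = "complex^2^2"

definition msc :: "complex \<Rightarrow> cmat2 \<Rightarrow> cmat2" where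
  "msc c A = (\<chi> i j. c * A $ i $ j)"

fun mpow :: "cmat2 \<Rightarrow> nat \<Rightarrow> cmat2" where
  "mpow A 0 = mat 1"
| "mpow A (Suc n) = A ** mpow A n"

definition mexp :: "cmat2 \<Rightarrow> cmat2" where
  "mexp A = (\<Sum>n. msc (of_real (1 / fact n)) (mpow A n))"

definition is_eigenvalue :: "cmat2 \<Rightarrow> complex \<Rightarrow> bool" where
  "is_eigenvalue A c \<longleftrightarrow> (\<exists>v. v \<noteq> 0 \<and> A *v v = c *s v)"

definition mlog :: "cmat2 \<Rightarrow> cmat2" where
  "mlog M = (THE L. mexp L = M \<and>
      (\<forall>c. is_eigenvalue L c \<longrightarrow> - pi < Im c \<and> Im c < pi))"

definition Cos :: "complex \<Rightarrow> complex" where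
  "Cos z = (\<Sum>n. (-1)^n * z^n / of_nat (fact (2*n)))"

definition Sin :: "complex \<Rightarrow> complex" where
  "Sin z = (\<Sum>n. (-1)^n * z^n / of_nat (fact (2*n+1)))"

definition AC :: "complex \<Rightarrow> complex" where
  "AC z = integral {0..1::real} (\<lambda>t. 1 / (1 + 2 * of_real t * (1 - of_real t) * (z - 1)))"

end

theory Submission
  imports Defs
begin

text \<open>A traceless \<open>2\<times>2\<close> matrix satisfies \<open>X\<^sup>2 = -det X\<close>, so
  \<open>exp X = Cos(det X) + Sin(det X) X\<close>. Multiplying two such expressions gives
  \<open>exp X exp Y = a + C\<close> with \<open>C\<close> traceless, \<open>a = Cos D\<^sub>X Cos D\<^sub>Y + Sin D\<^sub>X Sin D\<^sub>Y T\<close>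
  and determinant \<open>1\<close>; part (a) is then the characteristic polynomial of this unimodular matrix.
  For (b) write \<open>a = cosh r\<close> with \<open>|Im r| < \<pi>\<close>: the principal logarithm of \<open>a + C\<close> is
  \<open>(r / sinh r) C\<close>, and \<open>r / sinh r = AC(cosh r)\<close> because the integrand of \<open>AC\<close> factors as
  \<open>1 / ((1 + t(e\<^sup>r - 1))(1 + t(e\<^sup>-\<^sup>r - 1)))\<close>, whose partial fractions integrate to logarithms.\<close>

lemma msc_nth [simp]: "msc c A $ i $ j = c * A $ i $ j"
  by (simp add: msc_def)

lemma mat_1_nth: "(mat 1 :: cmat2) $ i $ j = (if i = j then 1 else 0)"
  by (simp add: mat_def)

lemma matrix_mult_2_nth: "((A::cmat2) ** B) $ i $ j = A$i$1 * B$1$j + A$i$2 * B$2$j"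
  by (simp add: matrix_matrix_mult_def sum_2)

lemma trace_2: "trace (A::cmat2) = A$1$1 + A$2$2"
  by (simp add: trace_def sum_2)

lemmas cmat2_simps = mat_1_nth matrix_mult_2_nth det_2 trace_2

lemma cmat2_eqI:
  fixes A B :: cmat2
  assumes "A$1$1 = B$1$1" "A$1$2 = B$1$2" "A$2$1 = B$2$1" "A$2$2 = B$2$2"
  shows "A = B"
  using assms by (simp add: vec_eq_iff forall_2)

lemma trace_msc: "trace (msc c A) = c * trace A"
  by (simp add: cmat2_simps algebra_simps)

lemma det_scalar_plus_msc:
  "det (msc \<alpha> (mat 1) + msc \<beta> M) = \<alpha>^2 + \<alpha> * \<beta> * trace M + \<beta>^2 * det M"
  by (simp add: cmat2_simps power2_eq_square algebra_simps)

lemma trace_scalar_plus_msc: "trace (msc \<alpha> (mat 1) + msc \<beta> M) = 2 * \<alpha> + \<beta> * trace M"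
  by (simp add: cmat2_simps algebra_simps)

lemma det_msc: "det (msc c A) = c^2 * det A"
  by (simp add: cmat2_simps power2_eq_square algebra_simps)

lemma det_sub_scalar: "det (M - msc c (mat 1)) = c^2 - trace M * c + det M"
  by (simp add: cmat2_simps power2_eq_square algebra_simps)

lemma is_eigenvalue_2_iff:
  "is_eigenvalue M c \<longleftrightarrow> (\<exists>x y. (x \<noteq> 0 \<or> y \<noteq> 0) \<and>
      M$1$1 * x + M$1$2 * y = c * x \<and> M$2$1 * x + M$2$2 * y = c * y)"
  unfolding is_eigenvalue_def
proof
  assume "\<exists>v. v \<noteq> 0 \<and> M *v v = c *s v"
  then obtain v :: "complex^2" where "v \<noteq> 0" "M *v v = c *s v" by blast
  then show "\<exists>x y. (x \<noteq> 0 \<or> y \<noteq> 0) \<and>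
      M$1$1 * x + M$1$2 * y = c * x \<and> M$2$1 * x + M$2$2 * y = c * y"
    by (intro exI[of _ "v$1"] exI[of _ "v$2"])
      (auto simp: vec_eq_iff forall_2 matrix_vector_mult_def sum_2)
next
  assume "\<exists>x y. (x \<noteq> 0 \<or> y \<noteq> 0) \<and>
      M$1$1 * x + M$1$2 * y = c * x \<and> M$2$1 * x + M$2$2 * y = c * y"
  then obtain x y where "x \<noteq> 0 \<or> y \<noteq> 0"
    "M$1$1 * x + M$1$2 * y = c * x" "M$2$1 * x + M$2$2 * y = c * y" by blast
  then show "\<exists>v. v \<noteq> 0 \<and> M *v v = c *s v"
    by (intro exI[of _ "\<chi> i. if i = 1 then x else y"])
      (auto simp: vec_eq_iff forall_2 matrix_vector_mult_def sum_2)
qed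

lemma is_eigenvalue_iff: "is_eigenvalue M c \<longleftrightarrow> c^2 - trace M * c + det M = 0"
proof -
  have "is_eigenvalue M c \<longleftrightarrow> (c - M$1$1) * (c - M$2$2) = M$1$2 * M$2$1"
    unfolding is_eigenvalue_2_iff
  proof
    assume "\<exists>x y. (x \<noteq> 0 \<or> y \<noteq> 0) \<and>
        M$1$1 * x + M$1$2 * y = c * x \<and> M$2$1 * x + M$2$2 * y = c * y"
    then obtain x y where xy: "x \<noteq> 0 \<or> y \<noteq> 0"
      "M$1$1 * x + M$1$2 * y = c * x" "M$2$1 * x + M$2$2 * y = c * y" by blast
    let ?p = "(c - M$1$1) * (c - M$2$2) - M$1$2 * M$2$1"
    have "?p * x = 0" "?p * y = 0"
      using xy(2,3) by algebra+
    then show "(c - M$1$1) * (c - M$2$2) = M$1$2 * M$2$1"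
      using xy(1) by auto
  next
    assume ch: "(c - M$1$1) * (c - M$2$2) = M$1$2 * M$2$1"
    consider "M$1$2 \<noteq> 0" | "M$1$2 = 0" "c = M$2$2" | "M$1$2 = 0" "c = M$1$1" "c \<noteq> M$2$2"
      using ch by (metis mult_eq_0_iff right_minus_eq)
    then show "\<exists>x y. (x \<noteq> 0 \<or> y \<noteq> 0) \<and>
        M$1$1 * x + M$1$2 * y = c * x \<and> M$2$1 * x + M$2$2 * y = c * y"
    proof cases
      case 1
      then show ?thesis
        using ch by (intro exI[of _ "M$1$2"] exI[of _ "c - M$1$1"]) (auto simp: algebra_simps)
    next
      case 2
      then show ?thesis by (intro exI[of _ 0] exI[of _ 1]) auto
    next
      case 3
      then show ?thesis
        by (intro exI[of _ "c - M$2$2"] exI[of _ "M$2$1"]) (auto simp: algebra_simps)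
    qed
  qed
  also have "\<dots> \<longleftrightarrow> c^2 - trace M * c + det M = 0"
    by (simp add: cmat2_simps power2_eq_square algebra_simps)
  finally show ?thesis .
qed

definition pow_mean :: "complex \<Rightarrow> complex \<Rightarrow> nat \<Rightarrow> complex" where
  "pow_mean s r n = ((s + r)^n + (s - r)^n) / 2"

definition pow_divdiff :: "complex \<Rightarrow> complex \<Rightarrow> nat \<Rightarrow> complex" where
  "pow_divdiff s r n =
    (if r = 0 then of_nat n * s^(n - 1) else ((s + r)^n - (s - r)^n) / (2 * r))"

lemma pow_mean_Suc: "pow_mean s r (Suc n) = s * pow_mean s r n + r^2 * pow_divdiff s r n"
  by (auto simp: pow_mean_def pow_divdiff_def field_simps power2_eq_square)

lemma pow_divdiff_Suc: "pow_divdiff s r (Suc n) = pow_mean s r n + s * pow_divdiff s r n"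
proof (cases "r = 0")
  case True
  then show ?thesis by (cases n) (auto simp: pow_mean_def pow_divdiff_def algebra_simps)
next
  case False
  then show ?thesis by (auto simp: pow_mean_def pow_divdiff_def field_simps)
qed

text \<open>Cayley--Hamilton: \<open>L\<close> has eigenvalues \<open>s \<plusminus> r\<close>, so \<open>(L - s)\<^sup>2 = r\<^sup>2\<close>.\<close>
lemma mpow_eq:
  fixes L :: cmat2
  assumes s: "s = trace L / 2" and r: "r^2 = s^2 - det L"
  shows "mpow L n = msc (pow_mean s r n) (mat 1) + msc (pow_divdiff s r n) (L - msc s (mat 1))"
proof (induction n)
  case 0
  show ?case by (rule cmat2_eqI) (simp_all add: pow_mean_def pow_divdiff_def cmat2_simps)
next
  case (Suc n)
  have "s = (L$1$1 + L$2$2) / 2" "r^2 = s^2 - (L$1$1 * L$2$2 - L$1$2 * L$2$1)"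
    using s r by (simp_all add: cmat2_simps)
  then show ?case
    unfolding mpow.simps Suc pow_mean_Suc pow_divdiff_Suc
    by (intro cmat2_eqI; simp add: cmat2_simps field_simps power2_eq_square; algebra)
qed

definition sinhc :: "complex \<Rightarrow> complex" where
  "sinhc z = (if z = 0 then 1 else sinh z / z)"

lemma sinh_eq_mult_sinhc: "sinh z = z * sinhc z"
  by (simp add: sinhc_def)

lemma exp_sums_of_real: "(\<lambda>n. of_real (1 / fact n) * z^n) sums exp (z::complex)"
  using exp_converges[of z] by (simp add: scaleR_conv_of_real divide_inverse mult.commute)

lemma sums_pairs:
  assumes "f sums s"
  shows "(\<lambda>n. f (2*n) + f (2*n + 1)) sums s"
proof -
  have "{n*2..<n*2 + 2} = {2*n, 2*n + 1}" for n :: nat by auto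
  then show ?thesis using sums_group[OF assms, of 2] by simp
qed

lemma exp_add_plus_exp_diff: "exp (s + r) + exp (s - r) = 2 * exp s * cosh (r::complex)"
  using exp_add[of s r] exp_add[of s "- r"] by (simp add: cosh_field_def field_simps)

lemma exp_add_minus_exp_diff: "exp (s + r) - exp (s - r) = 2 * exp s * sinh (r::complex)"
  using exp_add[of s r] exp_add[of s "- r"] by (simp add: sinh_field_def field_simps)

lemma pow_mean_sums: "(\<lambda>n. of_real (1 / fact n) * pow_mean s r n) sums (exp s * cosh r)"
proof -
  have "(\<lambda>n. (of_real (1 / fact n) * (s + r)^n + of_real (1 / fact n) * (s - r)^n) / 2)
      sums ((exp (s + r) + exp (s - r)) / 2)"
    by (intro sums_divide sums_add exp_sums_of_real)
  then show ?thesis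
    by (simp add: pow_mean_def exp_add_plus_exp_diff distrib_left)
qed

lemma pow_divdiff_sums: "(\<lambda>n. of_real (1 / fact n) * pow_divdiff s r n) sums (exp s * sinhc r)"
proof (cases "r = 0")
  case False
  have "(\<lambda>n. (of_real (1 / fact n) * (s + r)^n - of_real (1 / fact n) * (s - r)^n) / (2 * r))
      sums ((exp (s + r) - exp (s - r)) / (2 * r))"
    by (intro sums_divide sums_diff exp_sums_of_real)
  then show ?thesis
    using False by (simp add: pow_divdiff_def sinhc_def exp_add_minus_exp_diff right_diff_distrib)
next
  case True
  have "of_real (1 / fact (Suc n)) * pow_divdiff s r (Suc n) = of_real (1 / fact n) * s^n" for n
  proof -
    have "(of_real (1 / fact (Suc n)) :: complex) * of_nat (Suc n) = of_real (1 / fact n)"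
      by (simp add: fact_Suc divide_simps del: of_nat_Suc)
    then show ?thesis
      using True by (simp add: pow_divdiff_def mult.assoc[symmetric] del: of_nat_Suc)
  qed
  then have "(\<lambda>n. of_real (1 / fact (Suc n)) * pow_divdiff s r (Suc n)) sums exp s"
    using exp_sums_of_real[of s] by simp
  then have "(\<lambda>n. of_real (1 / fact n) * pow_divdiff s r n)
      sums (exp s + of_real (1 / fact 0) * pow_divdiff s r 0)"
    by (rule iffD1[OF sums_Suc_iff[where f = "\<lambda>n. of_real (1 / fact n) * pow_divdiff s r n"]])
  then show ?thesis
    using True by (simp add: sinhc_def pow_divdiff_def)
qed

lemma mexp_eq:
  fixes L :: cmat2
  assumes s: "s = trace L / 2" and r: "r^2 = s^2 - det L"
  shows "mexp L = msc (exp s * cosh r) (mat 1) + msc (exp s * sinhc r) (L - msc s (mat 1))"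
proof -
  let ?E = "msc (exp s * cosh r) (mat 1) + msc (exp s * sinhc r) (L - msc s (mat 1))"
  have "(\<lambda>n. msc (of_real (1 / fact n)) (mpow L n)) sums ?E"
    unfolding sums_def
  proof (intro vec_tendstoI)
    fix i j
    have "(\<lambda>n. of_real (1 / fact n) * pow_mean s r n * mat 1 $ i $ j
          + of_real (1 / fact n) * pow_divdiff s r n * (L - msc s (mat 1)) $ i $ j)
        sums (exp s * cosh r * mat 1 $ i $ j + exp s * sinhc r * (L - msc s (mat 1)) $ i $ j)"
      by (intro sums_add sums_mult2 pow_mean_sums pow_divdiff_sums)
    then show "(\<lambda>n. (\<Sum>k<n. msc (of_real (1 / fact k)) (mpow L k)) $ i $ j) \<longlonglongrightarrow> ?E $ i $ j"
      unfolding sums_def mpow_eq[OF s r] by (simp add: algebra_simps)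
  qed
  then show ?thesis
    unfolding mexp_def by (rule sums_unique[symmetric])
qed

lemma det_mexp: "det (mexp L) = exp (trace L)"
proof -
  define s where "s = trace L / 2"
  define r where "r = csqrt (s^2 - det L)"
  have r2: "r^2 = s^2 - det L" by (simp add: r_def)
  have traceless: "trace (L - msc s (mat 1)) = 0"
    by (simp add: s_def cmat2_simps)
  have "det (L - msc s (mat 1)) = - (r^2)"
    unfolding det_sub_scalar r2 s_def by (simp add: power2_eq_square field_simps)
  then have "det (mexp L) = (exp s)^2 * (cosh r ^ 2 - sinh r ^ 2)"
    unfolding mexp_eq[OF s_def r2] det_scalar_plus_msc traceless sinh_eq_mult_sinhc
    by (simp add: power_mult_distrib algebra_simps)
  also have "\<dots> = exp (s + s)"
    unfolding hyperbolic_pythagoras by (simp add: power2_eq_square flip: exp_add)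
  also have "\<dots> = exp (trace L)"
    by (simp add: s_def)
  finally show ?thesis .
qed

lemma Cos_eq_cosh:
  assumes "r^2 = - D"
  shows "Cos D = cosh r"
proof -
  have pair: "of_real (1 / fact (2*n)) * pow_mean 0 r (2*n)
      + of_real (1 / fact (2*n + 1)) * pow_mean 0 r (2*n + 1)
      = (-1)^n * D^n / of_nat (fact (2*n))" for n
    by (simp add: pow_mean_def power_mult power_minus' assms power_minus[of D] of_real_divide
        del: fact_Suc)
  have "(\<lambda>n. (-1)^n * D^n / of_nat (fact (2*n))) sums (exp 0 * cosh r)"
    using sums_pairs[OF pow_mean_sums[of 0 r]] unfolding pair .
  then show ?thesis
    unfolding Cos_def by (simp add: sums_iff)
qed

lemma Sin_eq_sinhc:
  assumes "r^2 = - D"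
  shows "Sin D = sinhc r"
proof -
  have odd: "pow_divdiff 0 r (2*n + 1) = (r^2)^n" for n
  proof (cases "r = 0")
    case False
    then show ?thesis by (simp add: pow_divdiff_def power_mult power_minus')
  qed (cases n; simp add: pow_divdiff_def)
  have even: "pow_divdiff 0 r (2*n) = 0" for n
    by (cases n) (simp_all add: pow_divdiff_def power_mult)
  have pair: "of_real (1 / fact (2*n)) * pow_divdiff 0 r (2*n)
      + of_real (1 / fact (2*n + 1)) * pow_divdiff 0 r (2*n + 1)
      = (-1)^n * D^n / of_nat (fact (2*n + 1))" for n
    unfolding odd even assms power_minus[of D] by (simp add: of_real_divide del: fact_Suc)
  have "(\<lambda>n. (-1)^n * D^n / of_nat (fact (2*n + 1))) sums (exp 0 * sinhc r)"
    using sums_pairs[OF pow_divdiff_sums[of 0 r]] unfolding pair .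
  then show ?thesis
    unfolding Sin_def by (simp add: sums_iff)
qed

lemma mexp_traceless:
  assumes "trace X = 0"
  shows "mexp X = msc (Cos (det X)) (mat 1) + msc (Sin (det X)) X"
proof -
  define r where "r = csqrt (- det X)"
  have r2: "r^2 = - det X" by (simp add: r_def)
  have "mexp X = msc (exp 0 * cosh r) (mat 1) + msc (exp 0 * sinhc r) (X - msc 0 (mat 1))"
    by (rule mexp_eq) (simp_all add: assms r2)
  also have "X - msc 0 (mat 1) = X"
    by (rule cmat2_eqI) simp_all
  finally show ?thesis
    by (simp only: Cos_eq_cosh[OF r2] Sin_eq_sinhc[OF r2] exp_zero mult_1)
qed

lemma Cos_sq_plus_Sin_sq: "Cos D ^ 2 + D * Sin D ^ 2 = 1"
proof -
  define r where "r = csqrt (- D)"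
  have r2: "r^2 = - D" by (simp add: r_def)
  have "D * Sin D ^ 2 = - (sinh r ^ 2)"
    unfolding Sin_eq_sinhc[OF r2] sinh_eq_mult_sinhc power_mult_distrib r2 by simp
  then show ?thesis
    using hyperbolic_pythagoras[of r] by (simp add: Cos_eq_cosh[OF r2])
qed

lemma one_plus_segment_notin_nonpos_Reals:
  fixes l :: complex and t :: real
  assumes l: "l \<notin> \<real>\<^sub>\<le>\<^sub>0" and t: "0 \<le> t" "t \<le> 1"
  shows "1 + of_real t * (l - 1) \<notin> \<real>\<^sub>\<le>\<^sub>0"
proof
  assume "1 + of_real t * (l - 1) \<in> \<real>\<^sub>\<le>\<^sub>0"
  then have re: "1 + t * (Re l - 1) \<le> 0" and im: "t * Im l = 0"
    by (auto simp: complex_nonpos_Reals_iff)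
  then have "t \<noteq> 0" by auto
  then have "Im l = 0" using im by simp
  then have "Re l > 0" using l by (auto simp: complex_nonpos_Reals_iff)
  then have "t * Re l > 0" using t \<open>t \<noteq> 0\<close> by simp
  then show False using re t by (simp add: algebra_simps)
qed

lemma has_integral_Ln_segment:
  assumes l: "l \<notin> \<real>\<^sub>\<le>\<^sub>0"
  shows "((\<lambda>t. (l - 1) / (1 + of_real t * (l - 1))) has_integral Ln l) {0..1}"
proof -
  define g where "g z = 1 + z * (l - 1)" for z
  have "((\<lambda>t. Ln (g (of_real t))) has_vector_derivative (l - 1) / g (of_real t)) (at t within {0..1})"
    if "t \<in> {0..1}" for t
  proof (rule has_vector_derivative_real_field)
    have "g (of_real t) \<notin> \<real>\<^sub>\<le>\<^sub>0"
      using one_plus_segment_notin_nonpos_Reals[OF l] that by (simp add: g_def)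
    moreover have "(g has_field_derivative l - 1) (at (of_real t))"
      unfolding g_def by (auto intro!: derivative_eq_intros)
    ultimately show "((\<lambda>z. Ln (g z)) has_field_derivative (l - 1) / g (of_real t)) (at (of_real t))"
      unfolding divide_inverse_commute by (rule DERIV_chain2[OF has_field_derivative_Ln])
  qed
  from fundamental_theorem_of_calculus[OF _ this] show ?thesis
    by (simp add: g_def)
qed

lemma AC_integrand_partial_fractions:
  fixes l :: complex and t :: real
  assumes l: "l \<notin> \<real>\<^sub>\<le>\<^sub>0" and t: "0 \<le> t" "t \<le> 1"
  shows "(l - 1) / (1 + of_real t * (l - 1)) - (1/l - 1) / (1 + of_real t * (1/l - 1))
    = (l - 1/l) * (1 / (1 + 2 * of_real t * (1 - of_real t) * ((l + 1/l) / 2 - 1)))"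
proof -
  have l0: "l \<noteq> 0" using l by auto
  have l': "1/l \<notin> \<real>\<^sub>\<le>\<^sub>0" using l by (simp add: divide_inverse)
  have "1 + of_real t * (l - 1) \<notin> \<real>\<^sub>\<le>\<^sub>0" "1 + of_real t * (1/l - 1) \<notin> \<real>\<^sub>\<le>\<^sub>0"
    using one_plus_segment_notin_nonpos_Reals[OF l t] one_plus_segment_notin_nonpos_Reals[OF l' t] .
  then have "1 + of_real t * (l - 1) \<noteq> 0" "1 + of_real t * (1/l - 1) \<noteq> 0"
    by auto
  moreover have "(1 + of_real t * (l - 1)) * (1 + of_real t * (1/l - 1))
      = 1 + 2 * of_real t * (1 - of_real t) * ((l + 1/l) / 2 - 1)"
    using l0 by (simp add: field_simps)
  moreover have "(l - 1) * (1 + of_real t * (1/l - 1)) - (1/l - 1) * (1 + of_real t * (l - 1))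
      = l - 1/l"
    by algebra
  ultimately show ?thesis
    by (simp add: diff_frac_eq)
qed

lemma AC_Joukowsky:
  assumes l: "l \<notin> \<real>\<^sub>\<le>\<^sub>0"
  shows "AC ((l + 1/l) / 2) * (l - 1/l) = 2 * Ln l"
proof (cases "l - 1/l = 0")
  case True
  have "l \<noteq> 0" using l by auto
  then have "l * l = 1" using True by (simp add: field_simps)
  then have "l = 1 \<or> l = -1" by (metis square_eq_1_iff power2_eq_square)
  then show ?thesis using l True by auto
next
  case False
  have "1/l \<notin> \<real>\<^sub>\<le>\<^sub>0" using l by (simp add: divide_inverse)
  then have diff: "((\<lambda>t. (l - 1) / (1 + of_real t * (l - 1)) - (1/l - 1) / (1 + of_real t * (1/l - 1)))
      has_integral (Ln l - Ln (1/l))) {0..1}"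
    by (intro has_integral_diff has_integral_Ln_segment l)
  have Ln_diff: "Ln l - Ln (1/l) = 2 * Ln l"
    using Ln_inverse[OF l] by (simp add: divide_inverse)
  have "\<And>t. t \<in> {0..1} \<Longrightarrow>
      (l - 1) / (1 + of_real t * (l - 1)) - (1/l - 1) / (1 + of_real t * (1/l - 1))
      = (l - 1/l) * (1 / (1 + 2 * of_real t * (1 - of_real t) * ((l + 1/l) / 2 - 1)))"
    using AC_integrand_partial_fractions[OF l] by simp
  from has_integral_eq[OF this diff]
  have "((\<lambda>t. (l - 1/l) * (1 / (1 + 2 * of_real t * (1 - of_real t) * ((l + 1/l) / 2 - 1))))
      has_integral 2 * Ln l) {0..1}"
    unfolding Ln_diff .
  then have "((\<lambda>t. 1 / (1 + 2 * of_real t * (1 - of_real t) * ((l + 1/l) / 2 - 1)))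
      has_integral 2 * Ln l / (l - 1/l)) {0..1}"
    using has_integral_mult_right_iff False by blast
  then have "AC ((l + 1/l) / 2) = 2 * Ln l / (l - 1/l)"
    unfolding AC_def by (rule integral_unique)
  then show ?thesis using False by simp
qed

lemma AC_cosh_mult_sinhc:
  assumes "- pi < Im r" "Im r < pi" and "exp r \<notin> \<real>\<^sub>\<le>\<^sub>0"
  shows "AC (cosh r) * sinhc r = 1"
proof (cases "r = 0")
  case True
  then show ?thesis by (simp add: AC_def sinhc_def)
next
  case False
  have ch: "(exp r + 1 / exp r) / 2 = cosh r" and sh: "exp r - 1 / exp r = 2 * sinh r"
    by (simp_all add: cosh_field_def sinh_field_def exp_minus inverse_eq_divide)
  have ln: "Ln (exp r) = r"
    using assms(1,2) by (simp add: Ln_exp)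
  have "2 * (AC (cosh r) * sinh r) = 2 * r"
    using AC_Joukowsky[OF assms(3)] unfolding ch sh ln by (simp only: ac_simps)
  then have "AC (cosh r) * sinh r = r" by simp
  then show ?thesis
    using False by (simp add: sinhc_def)
qed

lemma is_eigenvalue_exp:
  assumes "det M = 1" "trace M = 2 * cosh r"
  shows "is_eigenvalue M (exp r)"
  unfolding is_eigenvalue_iff assms
  using exp_minus_inverse[of r] by (simp add: cosh_field_def power2_eq_square algebra_simps)

lemma trace_eq_0_if_det_mexp_eq_1:
  assumes det: "det (mexp K) = 1"
    and strip: "\<forall>c. is_eigenvalue K c \<longrightarrow> - pi < Im c \<and> Im c < pi"
  shows "trace K = 0"
proof -
  define s where "s = trace K / 2"
  define \<rho> where "\<rho> = csqrt (s^2 - det K)"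
  have \<rho>2: "\<rho>^2 = s^2 - det K" and tK: "trace K = 2 * s"
    by (simp_all add: \<rho>_def s_def)
  have "is_eigenvalue K (s + \<rho>)" "is_eigenvalue K (s - \<rho>)"
    using \<rho>2 unfolding is_eigenvalue_iff tK by (simp_all add: power2_eq_square algebra_simps)
  then have "- pi < Im (s + \<rho>)" "Im (s + \<rho>) < pi" "- pi < Im (s - \<rho>)" "Im (s - \<rho>) < pi"
    using strip by blast+
  then have "- pi < Im s" "Im s < pi"
    by simp_all
  moreover obtain n :: int where n: "Re (2 * s) = 0" "Im (2 * s) = of_int (2 * n) * pi"
    using det exp_eq_1 unfolding det_mexp s_def by auto
  ultimately have "(- 1) * pi < of_int n * pi" "of_int n * pi < 1 * pi"
    by simp_all
  then have "- 1 < real_of_int n" "real_of_int n < 1"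
    unfolding mult_less_cancel_right_pos[OF pi_gt_zero] .
  then have "n = 0" by linarith
  then show ?thesis
    using n by (simp add: s_def complex_eq_iff)
qed

lemma principal_cosh_root:
  assumes "det M = 1" "trace M = 2 * a" "\<forall>c. is_eigenvalue M c \<longrightarrow> c \<notin> \<real>\<^sub>\<le>\<^sub>0"
  obtains r where "- pi < Im r" "Im r < pi" "cosh r = a"
proof -
  define l where "l = a + csqrt (a^2 - 1)"
  have "l * l + 1 = 2 * a * l"
    using power2_csqrt[of "a^2 - 1"] unfolding l_def power2_eq_square by algebra
  then have "is_eigenvalue M l"
    unfolding is_eigenvalue_iff assms(1,2) by (simp add: power2_eq_square algebra_simps)
  then have l: "l \<notin> \<real>\<^sub>\<le>\<^sub>0" "l \<noteq> 0"
    using assms(3) by auto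
  have "- pi < Im (Ln l)" "Im (Ln l) < pi"
    using mpi_less_Im_Ln[OF l(2)] Im_Ln_less_pi[OF l(1)] .
  moreover have "cosh (Ln l) = a"
    using l(2) \<open>l * l + 1 = 2 * a * l\<close> by (simp add: cosh_field_def exp_minus field_simps)
  ultimately show thesis by (rule that)
qed

lemma principal_log_unique:
  assumes dM: "det M = 1" and tM: "trace M = 2 * a"
    and eig: "\<forall>c. is_eigenvalue M c \<longrightarrow> c \<notin> \<real>\<^sub>\<le>\<^sub>0"
    and K: "mexp K = M" "\<forall>c. is_eigenvalue K c \<longrightarrow> - pi < Im c \<and> Im c < pi"
  shows "K = msc (AC a) (M - msc a (mat 1))"
proof -
  have trK: "trace K = 0"
    using trace_eq_0_if_det_mexp_eq_1 K dM by simp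
  define \<rho> where "\<rho> = csqrt (- det K)"
  have \<rho>2: "\<rho>^2 = - det K"
    by (simp add: \<rho>_def)
  have "is_eigenvalue K \<rho>"
    unfolding is_eigenvalue_iff trK using \<rho>2 by simp
  then have strip: "- pi < Im \<rho>" "Im \<rho> < pi"
    using K(2) by blast+
  have M: "M = msc (cosh \<rho>) (mat 1) + msc (sinhc \<rho>) K"
    using mexp_traceless[OF trK] K(1) unfolding Cos_eq_cosh[OF \<rho>2] Sin_eq_sinhc[OF \<rho>2] by simp
  then have "trace M = 2 * cosh \<rho>"
    using trK by (simp add: trace_scalar_plus_msc)
  then have a: "a = cosh \<rho>" and "exp \<rho> \<notin> \<real>\<^sub>\<le>\<^sub>0"
    using tM is_eigenvalue_exp[OF dM] eig by auto
  then have inv: "AC a * sinhc \<rho> = 1"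
    using AC_cosh_mult_sinhc[OF strip] by simp
  have "M - msc a (mat 1) = msc (sinhc \<rho>) K"
    unfolding M a by (rule cmat2_eqI) simp_all
  then show ?thesis
    by (intro cmat2_eqI) (simp_all add: mult.assoc[symmetric] inv)
qed

lemma principal_log_exists:
  assumes dM: "det M = 1" and tM: "trace M = 2 * a"
    and eig: "\<forall>c. is_eigenvalue M c \<longrightarrow> c \<notin> \<real>\<^sub>\<le>\<^sub>0"
  defines "L \<equiv> msc (AC a) (M - msc a (mat 1))"
  shows "mexp L = M \<and> (\<forall>c. is_eigenvalue L c \<longrightarrow> - pi < Im c \<and> Im c < pi)"
proof -
  obtain r where strip: "- pi < Im r" "Im r < pi" and a: "cosh r = a"
    using principal_cosh_root[OF dM tM eig] .
  have "exp r \<notin> \<real>\<^sub>\<le>\<^sub>0"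
    using is_eigenvalue_exp[OF dM] tM a eig by auto
  then have inv: "AC a * sinhc r = 1"
    using AC_cosh_mult_sinhc[OF strip] a by simp
  define D where "D = - (r^2)"
  have r2: "r^2 = - D"
    by (simp add: D_def)
  have CS: "Cos D = a" "Sin D = sinhc r"
    using Cos_eq_cosh[OF r2] Sin_eq_sinhc[OF r2] a by simp_all
  have trL: "trace L = 0"
    by (simp add: L_def trace_msc trace_sub tM trace_I)
  have "det L = AC a ^ 2 * (1 - a^2)"
    unfolding L_def det_msc det_sub_scalar tM dM by (simp add: power2_eq_square)
  also have "1 - a^2 = D * Sin D ^ 2"
    using Cos_sq_plus_Sin_sq[of D] unfolding CS by (simp add: algebra_simps)
  finally have detL: "det L = D"
    using inv CS by (simp add: power_mult_distrib[symmetric] algebra_simps)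
  have "mexp L = msc a (mat 1) + msc (sinhc r) L"
    using mexp_traceless[OF trL] unfolding detL CS .
  also have "\<dots> = M"
    using inv unfolding L_def mult.commute[of "AC a"]
    by (intro cmat2_eqI) (simp_all add: mult.assoc[symmetric])
  finally have "mexp L = M" .
  moreover have "- pi < Im c \<and> Im c < pi" if "is_eigenvalue L c" for c
  proof -
    have "c^2 = r^2"
      using that unfolding is_eigenvalue_iff trL detL r2 by (simp add: eq_neg_iff_add_eq_0)
    then have "c = r \<or> c = - r"
      by (simp add: power2_eq_iff)
    then show ?thesis
      using strip by auto
  qed
  ultimately show ?thesis by blast
qed

lemma mlog_eq:
  assumes "det M = 1" "trace M = 2 * a" "\<forall>c. is_eigenvalue M c \<longrightarrow> c \<notin> \<real>\<^sub>\<le>\<^sub>0"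
  shows "mlog M = msc (AC a) (M - msc a (mat 1))"
  unfolding mlog_def
  by (rule the_equality) (use principal_log_exists[OF assms] principal_log_unique[OF assms] in blast)+

lemma det_convex_comb_mat_1:
  assumes "det M = 1" "trace M = 2 * a"
  shows "det (msc (of_real (1 - t)) (mat 1) + msc (of_real t) M)
    = 1 + 2 * of_real t * (1 - of_real t) * (a - 1)"
  unfolding det_scalar_plus_msc assms by (simp add: power2_eq_square algebra_simps)

text \<open>\<open>XY = (XY + YX)/2 + [X,Y]/2\<close>, and \<open>XY + YX = tr(XY)\<close> for traceless \<open>2\<times>2\<close> matrices.\<close>
lemma scalar_plus_traceless_mult:
  fixes X Y :: cmat2
  assumes "trace X = 0" "trace Y = 0"
  shows "(msc \<alpha> (mat 1) + msc \<beta> X) ** (msc \<gamma> (mat 1) + msc \<delta> Y) =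
    msc (\<alpha> * \<gamma> + \<beta> * \<delta> * (trace (X ** Y) / 2)) (mat 1) +
    (msc (\<gamma> * \<beta>) X + msc (\<alpha> * \<delta>) Y + msc (\<beta> * \<delta> / 2) (X ** Y - Y ** X))"
proof -
  have "X$2$2 = - X$1$1" "Y$2$2 = - Y$1$1"
    using assms by (simp_all add: cmat2_simps eq_neg_iff_add_eq_0 add.commute)
  then show ?thesis
    by (intro cmat2_eqI) (simp_all add: cmat2_simps field_simps)
qed

lemma image_of_real_atMost_0: "complex_of_real ` {..0} = \<real>\<^sub>\<le>\<^sub>0"
  by (auto simp: nonpos_Reals_def)

theorem lemma4p1:
  fixes X Y :: "complex^2^2"
  assumes "trace X = 0" and "trace Y = 0"
  defines "DX \<equiv> det X" and "DY \<equiv> det Y" and "T \<equiv> trace (X ** Y) / 2"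
  defines "\<delta> \<equiv> (\<lambda>t::real. 1 + 2 * of_real t * (1 - of_real t) *
              (Sin DX * Sin DY * T + Cos DX * Cos DY - 1))"
  defines "C \<equiv> msc (Cos DY * Sin DX) X + msc (Cos DX * Sin DY) Y
              + msc (Sin DX * Sin DY / 2) (X ** Y - Y ** X)"
  shows "(\<forall>t::real. det (msc (of_real (1 - t)) (mat 1) + msc (of_real t) (mexp X ** mexp Y)) = \<delta> t)
    \<and> ((\<forall>c. is_eigenvalue (mexp X ** mexp Y) c \<longrightarrow> c \<notin> complex_of_real ` {..0})
        \<longrightarrow> mlog (mexp X ** mexp Y) = msc (AC (Cos DX * Cos DY + Sin DX * Sin DY * T)) C
          \<and> mlog (mexp X ** mexp Y) = msc (integral {0..1::real} (\<lambda>t. 1 / \<delta> t)) C)"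
proof -
  define a where "a = Cos DX * Cos DY + Sin DX * Sin DY * T"
  let ?M = "mexp X ** mexp Y"
  have M: "?M = msc a (mat 1) + C"
    unfolding mexp_traceless[OF assms(1)] mexp_traceless[OF assms(2)] a_def T_def C_def DX_def DY_def
    by (rule scalar_plus_traceless_mult[OF assms(1,2)])
  have dM: "det ?M = 1"
    by (simp add: det_mul det_mexp assms(1,2))
  have "trace (X ** Y - Y ** X) = 0"
    unfolding trace_sub trace_mul_sym[of X Y] by simp
  then have "trace C = 0"
    using assms(1,2) by (simp add: C_def trace_add trace_msc)
  then have tM: "trace ?M = 2 * a"
    unfolding M trace_add trace_msc by (simp add: trace_I)
  have \<delta>: "\<delta> t = 1 + 2 * of_real t * (1 - of_real t) * (a - 1)" for t
    by (simp add: \<delta>_def a_def add.commute)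
  have "mlog ?M = msc (AC a) C" if "\<forall>c. is_eigenvalue ?M c \<longrightarrow> c \<notin> \<real>\<^sub>\<le>\<^sub>0"
    using mlog_eq[OF dM tM that] M by simp
  moreover have "integral {0..1} (\<lambda>t. 1 / \<delta> t) = AC a"
    unfolding AC_def \<delta> ..
  ultimately show ?thesis
    using det_convex_comb_mat_1[OF dM tM] unfolding image_of_real_atMost_0 a_def[symmetric] \<delta>
    by auto
qed

end
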